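(* Let $\mathcal{G}^s$ be an SCG and consider the effect $P(y_t\mid \text{do}(x^1_{t-\gamma_1}),\dots,\text{do}(x^n_{t-\gamma_n}))$, and assume that no $\mathcal{G}^f\in\mathcal{C}(\mathcal{G}^s)$ contains, for any $i$, a directed path from $Y_t$ to $X^i_{t-\gamma_i}$ which remains in $\mathcal{NC}\cup\{X^i_{t-\gamma_i}\}$. The following are equivalent: 1. There exist an intervention $X^i_{t-\gamma_i}$, a vertex $F_{t_f}\in\mathcal{V}^f$ and a candidate FTCG $\mathcal{G}^f\in\mathcal{C}(\mathcal{G}^s)$ containing a path $X^i_{t-\gamma_i}\leftsquigarrow F_{t_f}\rightsquigarrow Y_t$ (the concatenation of a directed path from $F_{t_f}$ to $X^i_{t-\gamma_i}$ and a directed path from $F_{t_f}$ to $Y_t$) which remains in $\mathcal{NC}\cup\{X^i_{t-\gamma_i}\}$. 2. There exist an intervention $X^i_{t-\gamma_i}$ and $F_{t_f}\in\mathcal{V}^f$ such that $F_{t_f}$ is both $X^i_{t-\gamma_i}$-$\mathcal{NC}$-accessible and $Y_t$-$\mathcal{NC}$-accessible.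
   Context: Let $\mathcal{V}$ be a finite set of time series, $\mathcal{V}^f=\{X_s: X\in\mathcal{V},s\in\mathbb{Z}\}$. An FTCG is a DAG on $\mathcal{V}^f$ whose edges $X_s\to Z_{s'}$ satisfy $s\le s'$. The SCG reduced from an FTCG $\mathcal{G}^f$ is $\mathcal{G}^s=(\mathcal{V}^s,\mathcal{E}^s)$, $\mathcal{V}^s=\mathcal{V}$, with $X\to Z$ iff $\mathcal{G}^f$ has an edge $X_{s-\gamma}\to Z_s$ with $\gamma\ge0$. An SCG is a graph reduced from some FTCG; $\mathcal{C}(\mathcal{G}^s)$ is the class of candidate FTCGs (those from which $\mathcal{G}^s$ is reduced). Paths have distinct vertices; descendants are via directed paths (a vertex is its own descendant). A path from set $\mathbf{A}$ to $\mathbf{B}$ is proper if only its first vertex is in $\mathbf{A}$. A path remains in a set $S$ if all its vertices are in $S$. $\text{Forb}(\mathbf{X},\mathbf{Y},\mathcal{G})$ is the set of all descendants of any $W\notin\mathbf{X}$ lying on a proper directed path from $\mathbf{X}$ to $\mathbf{Y}$. Effect setup: fix $Y\in\mathcal{V}^s$, a time $t$, interventions $X^1_{t-\gamma_1},\dots,X^n_{t-\gamma_n}$ (distinct vertices of $\mathcal{V}^f$), with standing assumptions $\gamma_i\ge0$ and $Y$ a descendant of every $X^i$ in $\mathcal{G}^s$. $\mathcal{X}^f=\{X^i_{t-\gamma_i}\}_i$. $\mathcal{CF}=\bigcup_{\mathcal{G}^f\in\mathcal{C}(\mathcal{G}^s)}\text{Forb}(\mathcal{X}^f,Y_t,\mathcal{G}^f)$,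 $\mathcal{NC}=\mathcal{CF}\setminus\mathcal{X}^f$. For $V_{t_v}\in\mathcal{V}^f$, a vertex $F_{t_1}\in\mathcal{V}^f\setminus\{V_{t_v}\}$ is $V_{t_v}$-$\mathcal{NC}$-accessible if some candidate FTCG contains a directed path from $F_{t_1}$ to $V_{t_v}$ all of whose vertices, except possibly $V_{t_v}$, lie in $\mathcal{NC}$. *)

theory Defs
  imports Main
begin

text \<open>Vertices of a full-time causal graph (FTCG): a time series together with an integer time.\<close>
type_synonym 'v vtx = "'v \<times> int"

definition is_FTCG :: "'v set \<Rightarrow> ('v vtx \<times> 'v vtx) set \<Rightarrow> bool" where
  "is_FTCG V E \<longleftrightarrow> E \<subseteq> (V \<times> UNIV) \<times> (V \<times> UNIV) \<and> acyclic E
     \<and> (\<forall>a b. (a, b) \<in> E \<longrightarrow> snd a \<le> snd b)"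

definition reduce :: "('v vtx \<times> 'v vtx) set \<Rightarrow> ('v \<times> 'v) set" where
  "reduce E = {(X, Z). \<exists>s \<gamma>. \<gamma> \<ge> 0 \<and> ((X, s - \<gamma>), (Z, s)) \<in> E}"

definition is_SCG :: "'v set \<Rightarrow> ('v \<times> 'v) set \<Rightarrow> bool" where
  "is_SCG V Es \<longleftrightarrow> (\<exists>E. is_FTCG V E \<and> reduce E = Es)"

definition candidates :: "'v set \<Rightarrow> ('v \<times> 'v) set \<Rightarrow> ('v vtx \<times> 'v vtx) set set" where
  "candidates V Es = {E. is_FTCG V E \<and> reduce E = Es}"

definition dpath :: "('a \<times> 'a) set \<Rightarrow> 'a list \<Rightarrow> bool" where
  "dpath E p \<longleftrightarrow> p \<noteq> [] \<and> distinct p \<and> (\<forall>i < length p - 1. (p ! i, p ! Suc i) \<in> E)"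

definition dpath_from_to :: "('a \<times> 'a) set \<Rightarrow> 'a \<Rightarrow> 'a \<Rightarrow> 'a list \<Rightarrow> bool" where
  "dpath_from_to E a b p \<longleftrightarrow> dpath E p \<and> hd p = a \<and> last p = b"

definition descendants :: "('a \<times> 'a) set \<Rightarrow> 'a \<Rightarrow> 'a set" where
  "descendants E w = {d. \<exists>p. dpath_from_to E w d p}"

definition proper_dpath :: "('a \<times> 'a) set \<Rightarrow> 'a set \<Rightarrow> 'a set \<Rightarrow> 'a list \<Rightarrow> bool" where
  "proper_dpath E A B p \<longleftrightarrow> dpath E p \<and> hd p \<in> A \<and> last p \<in> B \<and> (\<forall>v \<in> set (tl p). v \<notin> A)"

definition Forb :: "('a \<times> 'a) set \<Rightarrow> 'a set \<Rightarrow> 'a set \<Rightarrow> 'a set" where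
  "Forb E A B = \<Union> {descendants E w | w. w \<notin> A \<and> (\<exists>p. proper_dpath E A B p \<and> w \<in> set p)}"

definition CF :: "'v set \<Rightarrow> ('v \<times> 'v) set \<Rightarrow> 'v vtx set \<Rightarrow> 'v vtx \<Rightarrow> 'v vtx set" where
  "CF V Es Xf y = (\<Union>E \<in> candidates V Es. Forb E Xf {y})"

definition NC :: "'v set \<Rightarrow> ('v \<times> 'v) set \<Rightarrow> 'v vtx set \<Rightarrow> 'v vtx \<Rightarrow> 'v vtx set" where
  "NC V Es Xf y = CF V Es Xf y - Xf"

definition accessible :: "'v set \<Rightarrow> ('v \<times> 'v) set \<Rightarrow> 'v vtx set \<Rightarrow> 'v vtx \<Rightarrow> 'v vtx \<Rightarrow> bool" where
  "accessible V Es N F v \<longleftrightarrow> F \<noteq> v \<and>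
     (\<exists>E \<in> candidates V Es. \<exists>p. dpath_from_to E F v p \<and> (\<forall>u \<in> set (butlast p). u \<in> N))"

end

theory Submission
  imports Defs "HOL-Library.Product_Lexorder"
begin

text \<open>Direction (2) \<Rightarrow> (1) is the substance. Two accessibility witnesses may live in different
  candidate FTCGs; cutting the first path at its last vertex on the second one yields a fork of two
  paths meeting only in its root. The edges of the fork, together with a copy of every SCG edge at
  lag one, form a single candidate FTCG: it reduces to the SCG, and it is acyclic because every edge
  increases time, or keeps time and increases the position along the fork.\<close>

lemma SCG_subset: "is_SCG Vs Es \<Longrightarrow> Es \<subseteq> Vs \<times> Vs"
  unfolding is_SCG_def is_FTCG_def reduce_def by blast

lemma reduce_Un: "reduce (A \<union> B) = reduce A \<union> reduce B"
  unfolding reduce_def by blast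

lemma reduce_subset_candidates: "T \<subseteq> \<Union> (candidates Vs Es) \<Longrightarrow> reduce T \<subseteq> Es"
  unfolding reduce_def candidates_def by blast

definition lag_one_edges :: "('v \<times> 'v) set \<Rightarrow> ('v vtx \<times> 'v vtx) set" where
  "lag_one_edges Es = {((A, s - 1), (B, s)) | A B s. (A, B) \<in> Es}"

lemma reduce_lag_one_edges: "reduce (lag_one_edges Es) = Es"
proof
  show "reduce (lag_one_edges Es) \<subseteq> Es"
    unfolding reduce_def lag_one_edges_def by auto
  show "Es \<subseteq> reduce (lag_one_edges Es)"
  proof
    fix e assume "e \<in> Es"
    then obtain A B where "e = (A, B)" "((A, 0 - 1), (B, 0)) \<in> lag_one_edges Es"
      unfolding lag_one_edges_def by (cases e) blast
    then show "e \<in> reduce (lag_one_edges Es)"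
      unfolding reduce_def by (simp, intro exI[of _ "0::int"] exI[of _ "1::int"]) simp
  qed
qed

lemma lag_one_Un_candidate:
  assumes "Es \<subseteq> Vs \<times> Vs" "T \<subseteq> \<Union> (candidates Vs Es)"
    and "acyclic (lag_one_edges Es \<union> T)"
  shows "lag_one_edges Es \<union> T \<in> candidates Vs Es"
proof -
  have "T \<subseteq> (Vs \<times> UNIV) \<times> (Vs \<times> UNIV)" "\<forall>a b. (a, b) \<in> T \<longrightarrow> snd a \<le> snd b"
    using assms(2) unfolding candidates_def is_FTCG_def by blast+
  moreover have "lag_one_edges Es \<subseteq> (Vs \<times> UNIV) \<times> (Vs \<times> UNIV)"
    using assms(1) unfolding lag_one_edges_def by auto
  moreover have "reduce (lag_one_edges Es \<union> T) = Es"
    using reduce_subset_candidates[OF assms(2)] by (auto simp: reduce_Un reduce_lag_one_edges)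
  ultimately show ?thesis
    using assms(3) unfolding candidates_def is_FTCG_def lag_one_edges_def by auto
qed

lemma acyclic_by_time_and_rank:
  fixes rank :: "'a \<times> 'b::order \<Rightarrow> 'c::order"
  assumes "\<And>a b. (a, b) \<in> R \<Longrightarrow> snd a < snd b"
    and "\<And>a b. (a, b) \<in> T \<Longrightarrow> snd a \<le> snd b \<and> rank a < rank b"
  shows "acyclic (R \<union> T)"
proof -
  have "acyclic ((R \<union> T)\<inverse>)"
    by (rule acyclicI_order[where f = "\<lambda>u. (snd u, rank u)"]) (auto dest: assms)
  then show ?thesis by simp
qed

definition path_edges :: "'a list \<Rightarrow> ('a \<times> 'a) set" where
  "path_edges p = {(p ! i, p ! Suc i) | i. Suc i < length p}"

lemma path_edges_subset: "path_edges p \<subseteq> set p \<times> set p"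
  unfolding path_edges_def by auto

lemma dpath_iff_path_edges: "dpath E p \<longleftrightarrow> p \<noteq> [] \<and> distinct p \<and> path_edges p \<subseteq> E"
  unfolding dpath_def path_edges_def by (auto simp: less_diff_conv)

lemma dpath_from_to_singleton: "dpath_from_to E a a [a]"
  unfolding dpath_from_to_def dpath_def by simp

lemma dpath_suffix: "dpath E (xs @ ys) \<Longrightarrow> ys \<noteq> [] \<Longrightarrow> dpath E ys"
  unfolding dpath_def by (auto simp: nth_append dest!: spec[of _ "length xs + _"])

definition position :: "'a list \<Rightarrow> 'a \<Rightarrow> nat" where
  "position p = inv_into {..<length p} ((!) p)"

lemma position_nth: "distinct p \<Longrightarrow> i < length p \<Longrightarrow> position p (p ! i) = i"
  unfolding position_def by (simp add: inj_on_nth)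

lemma position_hd: "distinct p \<Longrightarrow> p \<noteq> [] \<Longrightarrow> position p (hd p) = 0"
  using position_nth[of p 0] by (simp add: hd_conv_nth)

lemma position_path_edge:
  "distinct p \<Longrightarrow> (a, b) \<in> path_edges p \<Longrightarrow> position p b = Suc (position p a)"
  unfolding path_edges_def by (auto simp: position_nth)

lemma acyclic_lag_one_fork:
  assumes "distinct p1" "distinct p2" "hd p1 = hd p2" "set p1 \<inter> set p2 = {hd p1}"
    and "\<And>a b. (a, b) \<in> path_edges p1 \<union> path_edges p2 \<Longrightarrow> snd a \<le> snd b"
  shows "acyclic (lag_one_edges Es \<union> (path_edges p1 \<union> path_edges p2))"
proof (rule acyclic_by_time_and_rank)
  define rank where "rank u = (if u \<in> set p1 then position p1 u else position p2 u)" for u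
  have "p1 \<noteq> []" "p2 \<noteq> []" using assms(4) by auto
  have rank2: "rank u = position p2 u" if "u \<in> set p2" for u
  proof (cases "u \<in> set p1")
    case True
    then have "u = hd p1" using that assms(4) by blast
    then show ?thesis
      using True assms(3) position_hd[OF assms(1) \<open>p1 \<noteq> []\<close>] position_hd[OF assms(2) \<open>p2 \<noteq> []\<close>]
      by (simp add: rank_def)
  qed (simp add: rank_def)
  have "rank a < rank b" if "(a, b) \<in> path_edges p1 \<union> path_edges p2" for a b
    using that
  proof
    assume e: "(a, b) \<in> path_edges p1"
    then have "a \<in> set p1" "b \<in> set p1" using path_edges_subset by blast+
    then show ?thesis using e assms(1) by (simp add: rank_def position_path_edge)
  next
    assume e: "(a, b) \<in> path_edges p2"
    then have "a \<in> set p2" "b \<in> set p2" using path_edges_subset by blast+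
    then show ?thesis using e assms(2) by (simp add: rank2 position_path_edge)
  qed
  then show "snd a \<le> snd b \<and> rank a < rank b"
    if "(a, b) \<in> path_edges p1 \<union> path_edges p2" for a b
    using that assms(5) by blast
qed (auto simp: lag_one_edges_def)

lemma candidate_containing_fork:
  assumes "Es \<subseteq> Vs \<times> Vs" "E1 \<in> candidates Vs Es" "E2 \<in> candidates Vs Es"
    and "dpath E1 p1" "dpath E2 p2" "hd p1 = hd p2" "set p1 \<inter> set p2 = {hd p1}"
  shows "\<exists>E \<in> candidates Vs Es. dpath E p1 \<and> dpath E p2"
proof -
  let ?E = "lag_one_edges Es \<union> (path_edges p1 \<union> path_edges p2)"
  have sub: "path_edges p1 \<union> path_edges p2 \<subseteq> \<Union> (candidates Vs Es)"
    using assms(2-5) by (auto simp: dpath_iff_path_edges)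
  moreover have "snd a \<le> snd b" if "(a, b) \<in> path_edges p1 \<union> path_edges p2" for a b
    using that sub unfolding candidates_def is_FTCG_def by blast
  ultimately have "?E \<in> candidates Vs Es"
    using assms by (auto simp: dpath_iff_path_edges intro!: lag_one_Un_candidate acyclic_lag_one_fork)
  moreover have "dpath ?E p1" "dpath ?E p2"
    using assms(4,5) by (auto simp: dpath_iff_path_edges)
  ultimately show ?thesis by blast
qed

lemma split_at_last_common:
  assumes "set xs \<inter> set ys \<noteq> {}"
  shows "\<exists>as v bs cs ds. xs = as @ v # bs \<and> ys = cs @ v # ds \<and> set bs \<inter> set ys = {}"
  using assms
proof (induction xs)
  case Nil
  then show ?case by simp
next
  case (Cons a xs)
  show ?case
  proof (cases "set xs \<inter> set ys = {}")
    case True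
    with Cons.prems obtain cs ds where "ys = cs @ a # ds"
      by (auto dest: split_list)
    with True show ?thesis
      by (intro exI[of _ "[]"] exI[of _ a] exI[of _ xs] exI[of _ cs] exI[of _ ds]) simp
  next
    case False
    with Cons.IH obtain as v bs cs ds
      where "xs = as @ v # bs" "ys = cs @ v # ds" "set bs \<inter> set ys = {}"
      by blast
    then show ?thesis
      by (intro exI[of _ "a # as"] exI[of _ v] exI[of _ bs] exI[of _ cs] exI[of _ ds]) simp
  qed
qed

lemma fork_in_candidate:
  assumes "Es \<subseteq> Vs \<times> Vs" "E1 \<in> candidates Vs Es" "E2 \<in> candidates Vs Es"
    and q1: "dpath_from_to E1 F x q1" and q2: "dpath_from_to E2 F y q2"
  obtains E v p1 p2 where "E \<in> candidates Vs Es"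
    "dpath_from_to E v x p1" "dpath_from_to E v y p2" "distinct (rev p1 @ tl p2)"
    "set p1 \<subseteq> set q1" "set p2 \<subseteq> set q2"
proof -
  have q1': "dpath E1 q1" "hd q1 = F" "last q1 = x" and q2': "dpath E2 q2" "hd q2 = F" "last q2 = y"
    using q1 q2 unfolding dpath_from_to_def by auto
  then have "q1 \<noteq> []" "q2 \<noteq> []" "distinct q2"
    unfolding dpath_def by auto
  then have "set q1 \<inter> set q2 \<noteq> {}"
    using q1'(2) q2'(2) by (metis disjoint_iff hd_in_set)
  then obtain as v bs cs ds where q1_split: "q1 = as @ v # bs" and q2_split: "q2 = cs @ v # ds"
    and disj: "set bs \<inter> set q2 = {}"
    by (elim split_at_last_common[elim_format] exE conjE)
  have paths: "dpath E1 (v # bs)" "dpath E2 (v # ds)"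
    using dpath_suffix[of E1 as "v # bs"] dpath_suffix[of E2 cs "v # ds"] q1'(1) q2'(1)
    unfolding q1_split q2_split by simp_all
  have "v \<notin> set ds"
    using \<open>distinct q2\<close> q2_split by simp
  then have "set (v # bs) \<inter> set (v # ds) = {hd (v # bs)}"
    using disj q2_split by auto
  then obtain E where "E \<in> candidates Vs Es" "dpath E (v # bs)" "dpath E (v # ds)"
    using candidate_containing_fork[OF assms(1-3) paths] by auto
  moreover have "distinct (v # bs)" "distinct (v # ds)"
    using paths by (simp_all only: dpath_iff_path_edges)
  then have "distinct (rev (v # bs) @ tl (v # ds))"
    using disj q2_split by auto
  moreover have "last (v # bs) = x" "last (v # ds) = y"
    using q1'(3) q2'(3) q1_split q2_split by simp_all
  moreover have "set (v # bs) \<subseteq> set q1" "set (v # ds) \<subseteq> set q2"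
    using q1_split q2_split by auto
  ultimately show thesis
    by (intro that[of E v "v # bs" "v # ds"]) (simp_all add: dpath_from_to_def)
qed

lemma accessible_iff_subset:
  "accessible Vs Es N F v \<longleftrightarrow>
     F \<noteq> v \<and> (\<exists>E \<in> candidates Vs Es. \<exists>p. dpath_from_to E F v p \<and> set p \<subseteq> N \<union> {v})"
proof -
  have "set (butlast p) \<subseteq> N \<longleftrightarrow> set p \<subseteq> N \<union> {v}" if "dpath_from_to E F v p" for E p
  proof -
    from that obtain bs where "p = bs @ [v]" "distinct p"
      unfolding dpath_from_to_def dpath_def by (metis append_butlast_last_id)
    then show ?thesis by auto
  qed
  then show ?thesis unfolding accessible_def by blast
qed

lemma accessible_source_mem:
  assumes "accessible Vs Es N F v"
  shows "F \<in> N"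
proof -
  obtain E p where "F \<noteq> v" "dpath_from_to E F v p" "set p \<subseteq> N \<union> {v}"
    using assms by (auto simp: accessible_iff_subset)
  moreover from calculation have "F \<in> set p"
    unfolding dpath_from_to_def dpath_def by (metis hd_in_set)
  ultimately show ?thesis by blast
qed

lemma target_mem_NC:
  assumes "F \<in> NC Vs Es A y" "y \<notin> A"
  shows "y \<in> NC Vs Es A y"
proof -
  obtain E p where E: "E \<in> candidates Vs Es" and p: "proper_dpath E A {y} p"
    using assms(1) unfolding NC_def CF_def Forb_def by blast
  then have "y \<in> set p"
    unfolding proper_dpath_def dpath_def by (auto dest: last_in_set)
  moreover have "y \<in> descendants E y"
    unfolding descendants_def using dpath_from_to_singleton by fast
  ultimately have "y \<in> Forb E A {y}"
    using p assms(2) unfolding Forb_def by blast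
  then show ?thesis
    using E assms(2) unfolding NC_def CF_def by blast
qed

lemma fork_imp_accessible:
  assumes "E \<in> candidates Vs Es" "F \<noteq> x" "F \<noteq> y"
    and p1: "dpath_from_to E F x p1" and p2: "dpath_from_to E F y p2"
    and "distinct (rev p1 @ tl p2)" "set (p1 @ p2) \<subseteq> N \<union> {x}"
  shows "accessible Vs Es N F x \<and> accessible Vs Es N F y"
proof -
  have "p1 \<noteq> []" "last p1 = x" "p2 \<noteq> []" "hd p2 = F"
    using p1 p2 unfolding dpath_from_to_def dpath_def by auto
  then have "x \<in> set p1" "p2 = F # tl p2"
    by (metis last_in_set, metis list.collapse)
  then have "x \<notin> set p2"
    using assms(2,6) by (metis distinct_append disjoint_iff set_ConsD set_rev)
  then have "set p2 \<subseteq> N \<union> {y}"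
    using assms(7) by auto
  then show ?thesis
    using assms by (auto simp: accessible_iff_subset)
qed

lemma accessible_imp_fork:
  assumes "Es \<subseteq> Vs \<times> Vs" "x \<notin> N" "y \<in> N"
    and no_back: "\<forall>E \<in> candidates Vs Es. \<not> (\<exists>p. dpath_from_to E y x p \<and> set p \<subseteq> N \<union> {x})"
    and "accessible Vs Es N F x" "accessible Vs Es N F y"
  shows "\<exists>F. \<exists>E \<in> candidates Vs Es. \<exists>p1 p2. F \<noteq> x \<and> F \<noteq> y \<and>
           dpath_from_to E F x p1 \<and> dpath_from_to E F y p2 \<and>
           distinct (rev p1 @ tl p2) \<and> set (p1 @ p2) \<subseteq> N \<union> {x}"
proof -
  obtain E1 q1 where E1: "E1 \<in> candidates Vs Es" and q1: "dpath_from_to E1 F x q1"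
    and q1_sub: "set q1 \<subseteq> N \<union> {x}"
    using assms(5) by (auto simp: accessible_iff_subset)
  obtain E2 q2 where E2: "E2 \<in> candidates Vs Es" and q2: "dpath_from_to E2 F y q2"
    and q2_sub: "set q2 \<subseteq> N"
    using assms(3,6) by (auto simp: accessible_iff_subset)
  have "y \<notin> set q1"
  proof
    assume "y \<in> set q1"
    then obtain as bs where q1_split: "q1 = as @ y # bs" by (meson split_list)
    then have "dpath_from_to E1 y x (y # bs)"
      using q1 dpath_suffix[of E1 as "y # bs"] unfolding dpath_from_to_def by simp
    moreover have "set (y # bs) \<subseteq> N \<union> {x}"
      using q1_sub q1_split by auto
    ultimately show False using no_back E1 by blast
  qed
  obtain E v p1 p2 where E: "E \<in> candidates Vs Es" and p1: "dpath_from_to E v x p1"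
    and p2: "dpath_from_to E v y p2" and fork: "distinct (rev p1 @ tl p2)"
    and "set p1 \<subseteq> set q1" "set p2 \<subseteq> set q2"
    using fork_in_candidate[OF assms(1) E1 E2 q1 q2] by blast
  moreover have "v \<in> set p1" "v \<in> set p2"
    using p1 p2 unfolding dpath_from_to_def dpath_def by (metis hd_in_set)+
  ultimately have "v \<noteq> x" "v \<noteq> y" "set (p1 @ p2) \<subseteq> N \<union> {x}"
    using \<open>y \<notin> set q1\<close> q1_sub q2_sub assms(2) by auto
  then show ?thesis
    using E p1 p2 fork by blast
qed

theorem lemma3:
  fixes Vs :: "'v set" and Es :: "('v \<times> 'v) set" and Y :: 'v and t :: int
    and n :: nat and X :: "nat \<Rightarrow> 'v" and \<gamma> :: "nat \<Rightarrow> int"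
  assumes "finite Vs"
    and "is_SCG Vs Es"
    and "Y \<in> Vs"
    and "\<forall>i<n. X i \<in> Vs"
    and "inj_on (\<lambda>i. (X i, t - \<gamma> i)) {..<n}"
    and "\<forall>i<n. \<gamma> i \<ge> 0"
    and "\<forall>i<n. (X i, Y) \<in> Es\<^sup>*"
    and "\<forall>i<n. \<forall>E \<in> candidates Vs Es. \<not> (\<exists>p. dpath_from_to E (Y, t) (X i, t - \<gamma> i) p \<and>
            set p \<subseteq> NC Vs Es ((\<lambda>i. (X i, t - \<gamma> i)) ` {..<n}) (Y, t) \<union> {(X i, t - \<gamma> i)})"
  shows "(\<exists>i<n. \<exists>F. \<exists>E \<in> candidates Vs Es. \<exists>p1 p2.
            F \<noteq> (X i, t - \<gamma> i) \<and> F \<noteq> (Y, t) \<and>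
            dpath_from_to E F (X i, t - \<gamma> i) p1 \<and> dpath_from_to E F (Y, t) p2 \<and>
            distinct (rev p1 @ tl p2) \<and>
            set (p1 @ p2) \<subseteq> NC Vs Es ((\<lambda>i. (X i, t - \<gamma> i)) ` {..<n}) (Y, t) \<union> {(X i, t - \<gamma> i)})
     \<longleftrightarrow>
         (\<exists>i<n. \<exists>F.
            accessible Vs Es (NC Vs Es ((\<lambda>i. (X i, t - \<gamma> i)) ` {..<n}) (Y, t)) F (X i, t - \<gamma> i) \<and>
            accessible Vs Es (NC Vs Es ((\<lambda>i. (X i, t - \<gamma> i)) ` {..<n}) (Y, t)) F (Y, t))"
    (is "?fork \<longleftrightarrow> ?accessible")
proof
  show "?fork \<Longrightarrow> ?accessible"
    by (blast dest: fork_imp_accessible)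
next
  define Xf where "Xf = (\<lambda>i. (X i, t - \<gamma> i)) ` {..<n}"
  assume ?accessible
  then obtain i F where i: "i < n"
    and acc: "accessible Vs Es (NC Vs Es Xf (Y, t)) F (X i, t - \<gamma> i)"
      "accessible Vs Es (NC Vs Es Xf (Y, t)) F (Y, t)"
    unfolding Xf_def by blast
  have no_back: "\<forall>E \<in> candidates Vs Es. \<not> (\<exists>p. dpath_from_to E (Y, t) (X j, t - \<gamma> j) p \<and>
      set p \<subseteq> NC Vs Es Xf (Y, t) \<union> {(X j, t - \<gamma> j)})" if "j < n" for j
    using assms(8) that unfolding Xf_def by blast
  obtain E0 where "E0 \<in> candidates Vs Es"
    using assms(2) unfolding is_SCG_def candidates_def by blast
  then have "(Y, t) \<notin> Xf"
    using no_back dpath_from_to_singleton unfolding Xf_def by fastforce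
  then have "(Y, t) \<in> NC Vs Es Xf (Y, t)"
    using accessible_source_mem[OF acc(2)] by (rule target_mem_NC[rotated])
  moreover have "(X i, t - \<gamma> i) \<notin> NC Vs Es Xf (Y, t)"
    using i unfolding NC_def Xf_def by blast
  ultimately show ?fork
    using accessible_imp_fork[OF SCG_subset[OF assms(2)] _ _ no_back[OF i] acc] i
    unfolding Xf_def by blast
qed

end
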